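(* Let $(\Omega,\mathscr{B},\mu)$ be a probability space and $T:\Omega\to\Omega$ a measurable map preserving $\mu$, with $\mu$ ergodic. Let $U\subset\Omega$ be measurable with $\mu(U)>0$, and let $(U,\hat T,\hat\mu)$ be the induced system on $U$. Let $B_j\subset U$ ($j\in\mathbb{N}$) be measurable sets with $\mu(B_j)>0$ and $\mu(B_j)\to 0$ as $j\to\infty$. Suppose that either the limit $$F(t)=\lim_{j\to\infty}F_{B_j}(t)$$ exists for every $t>0$, or the limit $$\hat F(t)=\lim_{j\to\infty}\hat F_{B_j}(t)$$ exists for every $t>0$. Then both limits exist for every $t>0$ and $F(t)=\hat F(t)$ for all $t>0$.
   Context: For measurable $V\subset\Omega$ define $\tau_V(x)=\min\{j\ge1: T^jx\in V\}$ (with $\tau_V(x)=\infty$ if no such $j$ exists). For $U$ with $\mu(U)>0$, the induced map is $\hat T=T^{\tau_U}:U\to U$ (defined $\mu$-a.e. on $U$), and the induced measure is $\hat\mu(A)=\mu(A)/\mu(U)$ for measurable $A\subset U$; $\hat\mu$ is $\hat T$-invariant and ergodic. For $B\subset U$ with $\mu(B)>0$, let $\hat\tau_B(x)=\min\{j\ge1:\hat T^jx\in B\}$ for $x\in U$. The entry times distributions are, for $t>0$, $$F_B(t)=\mu\left(\left\{x\in\Omega:\tau_B(x)>\tfrac{t}{\mu(B)}\right\}\right),\qquad \hat F_B(t)=\hat\mu\left(\left\{x\in U:\hat\tau_B(x)>\tfrac{t}{\hat\mu(B)}\right\}\right).$$ *)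

theory Defs
  imports "HOL-Probability.Probability"
begin

definition mpreserving :: "'a measure \<Rightarrow> ('a \<Rightarrow> 'a) \<Rightarrow> bool" where
  "mpreserving M T \<longleftrightarrow> T \<in> measurable M M \<and>
     (\<forall>A \<in> sets M. measure M (T -` A \<inter> space M) = measure M A)"

definition ergodic_map :: "'a measure \<Rightarrow> ('a \<Rightarrow> 'a) \<Rightarrow> bool" where
  "ergodic_map M T \<longleftrightarrow>
     (\<forall>A \<in> sets M. T -` A \<inter> space M = A \<longrightarrow> measure M A = 0 \<or> measure M A = 1)"

definition entry_time :: "('a \<Rightarrow> 'a) \<Rightarrow> 'a set \<Rightarrow> 'a \<Rightarrow> enat" where
  "entry_time T V x =
     (if \<exists>j\<ge>1. (T ^^ j) x \<in> V then enat (LEAST j. j \<ge> 1 \<and> (T ^^ j) x \<in> V) else \<infinity>)"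

text \<open>Induced (first return) map T^{tau_U} on U; where tau_U is infinite (a null set)
  we arbitrarily let it be the identity.\<close>
definition induced_map :: "('a \<Rightarrow> 'a) \<Rightarrow> 'a set \<Rightarrow> 'a \<Rightarrow> 'a" where
  "induced_map T U x = (case entry_time T U x of enat n \<Rightarrow> (T ^^ n) x | \<infinity> \<Rightarrow> x)"

definition entry_dist :: "'a measure \<Rightarrow> ('a \<Rightarrow> 'a) \<Rightarrow> 'a set \<Rightarrow> real \<Rightarrow> real" where
  "entry_dist M T B t =
     measure M {x \<in> space M. ereal_of_enat (entry_time T B x) > ereal (t / measure M B)}"

definition induced_measure :: "'a measure \<Rightarrow> 'a set \<Rightarrow> 'a set \<Rightarrow> real" where
  "induced_measure M U A = measure M A / measure M U"

definition induced_entry_dist ::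
  "'a measure \<Rightarrow> ('a \<Rightarrow> 'a) \<Rightarrow> 'a set \<Rightarrow> 'a set \<Rightarrow> real \<Rightarrow> real" where
  "induced_entry_dist M T U B t =
     induced_measure M U {x \<in> U \<inter> space M.
        ereal_of_enat (entry_time (induced_map T U) B x) > ereal (t / induced_measure M U B)}"

end

theory Submission imports Defs begin

text \<open>Write \<open>c = \<mu> U\<close>, so that the induced measure of \<open>B\<close> is \<open>\<mu> B / c\<close>. A point of \<open>U\<close> that
  returns to \<open>U\<close> infinitely often avoids \<open>B \<subseteq> U\<close> during the first \<open>m\<close> steps of \<open>T\<close> exactly when it
  avoids \<open>B\<close> during the first \<open>N\<close> steps of the induced map, \<open>N\<close> being the number of returns to \<open>U\<close>
  up to time \<open>m\<close>. The ergodic theorem for indicators, proved here through a maximal inequality,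
  gives \<open>N \<approx> c m\<close> in \<open>L\<^sup>1\<close>; so \<open>c t / \<mu> B\<close> induced steps correspond to \<open>(1 \<plusminus> \<epsilon>) t / \<mu> B\<close>
  steps of \<open>T\<close>, and changing the number of steps by \<open>\<epsilon> t / \<mu> B\<close> changes the probability of
  avoiding \<open>B\<close> by at most \<open>\<epsilon> t\<close>. Finally, the event \<open>E\<close> of avoiding \<open>B\<close> for \<open>m\<close> steps decorrelates
  from \<open>U\<close>: shifting \<open>E\<close> by \<open>i\<close> steps changes it by at most \<open>i \<mu> B\<close>, and the average over \<open>i < L\<close> of
  \<open>\<mu> {x \<in> E. T\<^sup>i x \<in> U}\<close> is \<open>c \<mu> E\<close> up to the \<open>L\<^sup>1\<close> error of the ergodic averages.\<close>

lemma sum_lessThan_add_split: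
  fixes f :: "nat \<Rightarrow> 'b::comm_monoid_add"
  shows "(\<Sum>i<m + n. f i) = (\<Sum>i<m. f i) + (\<Sum>i<n. f (m + i))"
  by (induction n) (auto simp: ac_simps)

lemma real_nat_floor_bounds: "0 \<le> x \<Longrightarrow> real (nat \<lfloor>x\<rfloor>) \<le> x \<and> x - 1 \<le> real (nat \<lfloor>x\<rfloor>)"
  using floor_correct[of x] by linarith

lemma real_nat_ceiling_bounds: "0 \<le> x \<Longrightarrow> x \<le> real (nat \<lceil>x\<rceil>) \<and> real (nat \<lceil>x\<rceil>) \<le> x + 1"
  using ceiling_correct[of x] by linarith

text \<open>Every index \<open>i\<close> with \<open>\<not> e i\<close> starts a window of length at most \<open>N\<close> on which \<open>a\<close> averages
  more than \<open>\<beta>\<close>; covering \<open>{s..<s+K}\<close> greedily by such windows and by single indices with \<open>e i\<close>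
  loses at most the last \<open>N\<close> places.\<close>
lemma sum_ge_greedy_windows:
  fixes a :: "nat \<Rightarrow> real" and e :: "nat \<Rightarrow> bool"
  assumes a_nonneg: "\<And>i. 0 \<le> a i" and "0 \<le> \<beta>"
    and window: "\<And>i. \<not> e i \<Longrightarrow> \<exists>L. 1 \<le> L \<and> L \<le> N \<and> \<beta> * real L < (\<Sum>j<L. a (i + j))"
  shows "\<beta> * (real K - real N - (\<Sum>i<K. of_bool (e (s + i)))) \<le> (\<Sum>i<K. a (s + i))"
proof (induction K arbitrary: s rule: less_induct)
  case (less K)
  let ?bad = "\<lambda>s K. (\<Sum>i<K. of_bool (e (s + i)) :: real)"
  have bad_nonneg: "0 \<le> ?bad s K" for s K by (simp add: sum_nonneg)
  have sum_nonneg: "0 \<le> (\<Sum>i<K. a (s + i))" for s K using a_nonneg by (simp add: sum_nonneg)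
  show ?case
  proof (cases "K = 0")
    case False
    then obtain K' where K: "K = Suc K'" by (cases K) auto
    show ?thesis
    proof (cases "e s")
      case True
      have "\<beta> * (real K' - real N - ?bad (Suc s) K') \<le> (\<Sum>i<K'. a (Suc s + i))"
        using less.IH[of K' "Suc s"] K by simp
      moreover have "(\<Sum>i<K. a (s + i)) = a s + (\<Sum>i<K'. a (Suc s + i))"
        "?bad s K = 1 + ?bad (Suc s) K'"
        using True unfolding K by (subst sum.lessThan_Suc_shift, simp)+
      ultimately show ?thesis using a_nonneg[of s] \<open>0 \<le> \<beta>\<close> K by (simp add: algebra_simps)
    next
      case False
      obtain L where L: "1 \<le> L" "L \<le> N" "\<beta> * real L < (\<Sum>j<L. a (s + j))"
        using window[OF False] by auto
      show ?thesis
      proof (cases "L \<le> K")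
        case True
        have IH: "\<beta> * (real (K - L) - real N - ?bad (s + L) (K - L)) \<le> (\<Sum>i<K - L. a (s + L + i))"
          using less.IH[of "K - L" "s + L"] L True by simp
        have split: "(\<Sum>i<K. g (s + i)) = (\<Sum>i<L. g (s + i)) + (\<Sum>i<K - L. g (s + L + i))"
          for g :: "nat \<Rightarrow> real"
          using sum_lessThan_add_split[of "\<lambda>i. g (s + i)" L "K - L"] True by (simp add: add.assoc)
        have "\<beta> * (real K - real N - ?bad s K)
            = \<beta> * real L + \<beta> * (real (K - L) - real N - ?bad (s + L) (K - L)) - \<beta> * ?bad s L"
          using split[of "\<lambda>i. of_bool (e i)"] True by (simp add: algebra_simps of_nat_diff)
        also have "\<dots> \<le> (\<Sum>i<L. a (s + i)) + (\<Sum>i<K - L. a (s + L + i))"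
          using IH L(3) bad_nonneg[of s L] \<open>0 \<le> \<beta>\<close> by (smt (verit) mult_nonneg_nonneg)
        finally show ?thesis using split[of a] by simp
      next
        case False
        then have "real K - real N - ?bad s K \<le> 0" using L bad_nonneg[of s K] by linarith
        then show ?thesis using sum_nonneg[of s K] \<open>0 \<le> \<beta>\<close> by (smt (verit) mult_nonneg_nonpos)
      qed
    qed
  qed (use \<open>0 \<le> \<beta>\<close> in simp)
qed

lemma frequently_above_if_close:
  fixes f g :: "nat \<Rightarrow> real"
  assumes "0 < \<delta>" and close: "\<And>L. \<bar>f L - g L\<bar> \<le> 1"
    and frequently: "\<And>n. \<exists>L\<ge>n. (a + \<delta>) * real L < f L"
  shows "\<exists>L\<ge>n. (a + \<delta> / 2) * real L < g L"
proof -
  obtain L where L: "L \<ge> max n (nat \<lceil>2 / \<delta>\<rceil>)" "(a + \<delta>) * real L < f L"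
    using frequently by blast
  have "2 / \<delta> \<le> real L" using L(1) real_nat_ceiling_ge[of "2 / \<delta>"] by linarith
  then have "1 \<le> \<delta> / 2 * real L" using \<open>0 < \<delta>\<close> by (simp add: field_simps)
  moreover have "f L \<le> g L + 1" using close[of L] by (simp add: abs_le_iff)
  ultimately have "(a + \<delta> / 2) * real L < g L" using L(2) by (simp add: algebra_simps)
  then show ?thesis using L(1) by auto
qed

lemma ereal_less_entry_time_iff:
  assumes "0 \<le> s"
  shows "ereal s < ereal_of_enat (entry_time f V x) \<longleftrightarrow> (\<forall>j\<in>{1..nat \<lfloor>s\<rfloor>}. (f ^^ j) x \<notin> V)"
proof (cases "\<exists>j\<ge>1. (f ^^ j) x \<in> V")
  case True
  define r where "r = (LEAST j. j \<ge> 1 \<and> (f ^^ j) x \<in> V)"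
  have r: "r \<ge> 1" "(f ^^ r) x \<in> V" using LeastI_ex[of "\<lambda>j. j \<ge> 1 \<and> (f ^^ j) x \<in> V"] True
    unfolding r_def by auto
  have before_r: "(f ^^ j) x \<notin> V" if "1 \<le> j" "j < r" for j
    using not_less_Least[of j "\<lambda>j. j \<ge> 1 \<and> (f ^^ j) x \<in> V"] that unfolding r_def by blast
  have "entry_time f V x = enat r" using True unfolding entry_time_def r_def by simp
  then have "ereal s < ereal_of_enat (entry_time f V x) \<longleftrightarrow> \<lfloor>s\<rfloor> < int r"
    by (simp add: floor_less_iff)
  also have "\<dots> \<longleftrightarrow> nat \<lfloor>s\<rfloor> < r" using \<open>0 \<le> s\<close> by linarith
  also have "\<dots> \<longleftrightarrow> (\<forall>j\<in>{1..nat \<lfloor>s\<rfloor>}. (f ^^ j) x \<notin> V)"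
    using r before_r by (auto simp: not_less)
  finally show ?thesis .
qed (auto simp: entry_time_def)

lemma convergent_and_lim_eq_if_diff_tendsto_0:
  fixes f g :: "nat \<Rightarrow> real"
  assumes diff: "(\<lambda>j. g j - f j) \<longlonglongrightarrow> 0" and "convergent f \<or> convergent g"
  shows "convergent f \<and> convergent g \<and> lim f = lim g"
proof -
  have "f \<longlonglongrightarrow> l \<longleftrightarrow> g \<longlonglongrightarrow> l" for l
    using tendsto_add[OF _ diff, of f l] tendsto_diff[OF _ diff, of g l] by auto
  then show ?thesis using assms(2) unfolding convergent_def by (metis limI)
qed

lemma orbit_avoids_iff_split_at_first_return:
  fixes f :: "'b \<Rightarrow> 'b"
  assumes "B \<subseteq> U" "1 \<le> r" "r \<le> m" and before_r: "\<And>j. 1 \<le> j \<Longrightarrow> j < r \<Longrightarrow> (f ^^ j) x \<notin> U"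
  shows "(\<forall>j\<in>{1..m}. (f ^^ j) x \<notin> B) \<longleftrightarrow>
    (f ^^ r) x \<notin> B \<and> (\<forall>j\<in>{1..m - r}. (f ^^ j) ((f ^^ r) x) \<notin> B)"
proof -
  have shift: "(f ^^ (j - r)) ((f ^^ r) x) = (f ^^ j) x" if "r \<le> j" for j
    using that by (simp flip: funpow_add comp_apply[of "f ^^ _" "f ^^ _"])
  show ?thesis
  proof
    assume "\<forall>j\<in>{1..m}. (f ^^ j) x \<notin> B"
    then show "(f ^^ r) x \<notin> B \<and> (\<forall>j\<in>{1..m - r}. (f ^^ j) ((f ^^ r) x) \<notin> B)"
      using shift[of "_ + r"] assms(2,3) by auto
  next
    assume avoid: "(f ^^ r) x \<notin> B \<and> (\<forall>j\<in>{1..m - r}. (f ^^ j) ((f ^^ r) x) \<notin> B)"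
    show "\<forall>j\<in>{1..m}. (f ^^ j) x \<notin> B"
    proof
      fix j assume j: "j \<in> {1..m}"
      consider "j < r" | "j = r" | "j > r" by linarith
      then show "(f ^^ j) x \<notin> B"
      proof cases
        case 3
        then have "j - r \<in> {1..m - r}" using j by auto
        then have "(f ^^ (j - r)) ((f ^^ r) x) \<notin> B" using avoid by blast
        then show ?thesis using shift[of j] 3 by simp
      qed (use before_r \<open>B \<subseteq> U\<close> j avoid in auto)
    qed
  qed
qed

lemma orbit_avoids_iff_first_step_and_shifted:
  fixes c :: real and f :: "'b \<Rightarrow> 'b"
  assumes "0 \<le> c"
  shows "(\<forall>k. 1 \<le> k \<and> real k \<le> 1 + c \<longrightarrow> (f ^^ k) x \<notin> B) \<longleftrightarrow>
    f x \<notin> B \<and> (\<forall>k. 1 \<le> k \<and> real k \<le> c \<longrightarrow> (f ^^ k) (f x) \<notin> B)"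
proof -
  have shift: "(f ^^ Suc k) x = (f ^^ k) (f x)" for k by (simp only: funpow_Suc_right comp_apply)
  show ?thesis
  proof
    assume avoid: "\<forall>k. 1 \<le> k \<and> real k \<le> 1 + c \<longrightarrow> (f ^^ k) x \<notin> B"
    show "f x \<notin> B \<and> (\<forall>k. 1 \<le> k \<and> real k \<le> c \<longrightarrow> (f ^^ k) (f x) \<notin> B)"
      using avoid[rule_format, of 1] avoid[rule_format, of "Suc _"] shift \<open>0 \<le> c\<close> by simp
  next
    assume avoid: "f x \<notin> B \<and> (\<forall>k. 1 \<le> k \<and> real k \<le> c \<longrightarrow> (f ^^ k) (f x) \<notin> B)"
    show "\<forall>k. 1 \<le> k \<and> real k \<le> 1 + c \<longrightarrow> (f ^^ k) x \<notin> B"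
    proof (intro allI impI)
      fix k assume k: "1 \<le> k \<and> real k \<le> 1 + c"
      then obtain k' where "k = Suc k'" by (cases k) auto
      then show "(f ^^ k) x \<notin> B" using avoid shift[of k'] k by (cases "k' = 0") auto
    qed
  qed
qed

lemma rounded_window_bounds:
  fixes s \<epsilon> c :: real
  assumes "1 \<le> s" "0 < \<epsilon>" "\<epsilon> \<le> 1 / 2" "0 < c"
  defines "k \<equiv> nat \<lfloor>s\<rfloor>" and "n \<equiv> nat \<lfloor>s * c\<rfloor>"
    and "m1 \<equiv> nat \<lfloor>(1 - \<epsilon>) * s\<rfloor>" and "m2 \<equiv> nat \<lceil>(1 + \<epsilon>) * s\<rceil>"
  shows "m1 \<le> k" "k \<le> m2" "real (k - m1) \<le> \<epsilon> * s + 2" "real (m2 - k) \<le> \<epsilon> * s + 2"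
    "real m1 \<le> 3 * s" "real m2 \<le> 3 * s"
    "\<epsilon> * s * c - 2 \<le> real n - 1 - real m1 * c" "\<epsilon> * s * c - 2 \<le> real m2 * c - real n - 1"
proof -
  have k: "real k \<le> s" "s - 1 \<le> real k" unfolding k_def using real_nat_floor_bounds[of s] assms(1) by auto
  have n: "real n \<le> s * c" "s * c - 1 \<le> real n"
    unfolding n_def using real_nat_floor_bounds[of "s * c"] assms(1,4) by auto
  have m1: "real m1 \<le> (1 - \<epsilon>) * s" "(1 - \<epsilon>) * s - 1 \<le> real m1"
    unfolding m1_def using real_nat_floor_bounds[of "(1 - \<epsilon>) * s"] assms(1,3) by auto
  have m2: "(1 + \<epsilon>) * s \<le> real m2" "real m2 \<le> (1 + \<epsilon>) * s + 1"
    unfolding m2_def using real_nat_ceiling_bounds[of "(1 + \<epsilon>) * s"] assms(1,2) by auto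
  have es: "0 \<le> \<epsilon> * s" "\<epsilon> * s \<le> s / 2"
    using assms(1-3) mult_right_mono[of \<epsilon> "1 / 2" s] by auto
  show "m1 \<le> k" unfolding m1_def k_def using assms(1,2)
    by (intro nat_mono floor_mono) (simp add: algebra_simps)
  have "real k \<le> real m2" using k(1) m2(1) es by (simp add: algebra_simps)
  then show "k \<le> m2" by simp
  show "real (k - m1) \<le> \<epsilon> * s + 2" "real (m2 - k) \<le> \<epsilon> * s + 2"
    using k m1 m2 \<open>m1 \<le> k\<close> \<open>k \<le> m2\<close> by (simp_all add: of_nat_diff algebra_simps)
  show "real m1 \<le> 3 * s" "real m2 \<le> 3 * s"
    using m1(1) m2(2) es assms(1) by (simp_all add: algebra_simps)
  show "\<epsilon> * s * c - 2 \<le> real n - 1 - real m1 * c" "\<epsilon> * s * c - 2 \<le> real m2 * c - real n - 1"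
    using n mult_right_mono[OF m1(1), of c] mult_right_mono[OF m2(1), of c] assms(4)
    by (simp_all add: algebra_simps)
qed

lemma nat_floor_ceiling_divide_at_top:
  fixes b :: "nat \<Rightarrow> real"
  assumes "b \<longlonglongrightarrow> 0" "\<And>j. 0 < b j" "0 < a"
  shows "filterlim (\<lambda>j. nat \<lfloor>a / b j\<rfloor>) at_top sequentially"
    "filterlim (\<lambda>j. nat \<lceil>a / b j\<rceil>) at_top sequentially"
proof -
  have "filterlim b (at_right 0) sequentially"
    using assms(1,2) by (intro tendsto_imp_filterlim_at_right) auto
  then have "filterlim (\<lambda>j. a / b j) at_top sequentially"
    using filterlim_compose[OF filterlim_inverse_at_top_right] \<open>0 < a\<close>
    by (auto intro!: filterlim_tendsto_pos_mult_at_top[OF tendsto_const] simp: divide_inverse)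
  then show floor: "filterlim (\<lambda>j. nat \<lfloor>a / b j\<rfloor>) at_top sequentially"
    by (rule filterlim_compose[OF filterlim_nat_sequentially
          filterlim_compose[OF filterlim_floor_sequentially]])
  show "filterlim (\<lambda>j. nat \<lceil>a / b j\<rceil>) at_top sequentially"
    by (intro filterlim_at_top_mono[OF floor] always_eventually allI nat_mono floor_le_ceiling)
qed

locale ergodic_system = prob_space M for M :: "'a measure" +
  fixes T :: "'a \<Rightarrow> 'a"
  assumes preserving: "mpreserving M T" and ergodic: "ergodic_map M T"
begin

lemma measurable_T[measurable]: "T \<in> measurable M M"
  using preserving unfolding mpreserving_def by auto

lemma measurable_funpow_T[measurable]: "(T ^^ n) \<in> measurable M M"
  by (induction n) (auto simp: funpow_Suc_right)

lemma funpow_T_space: "x \<in> space M \<Longrightarrow> (T ^^ n) x \<in> space M"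
  using measurable_space[OF measurable_funpow_T] by auto

lemma measure_funpow_preimage:
  assumes "A \<in> sets M"
  shows "measure M {x\<in>space M. (T ^^ n) x \<in> A} = measure M A"
proof (induction n)
  case 0
  then show ?case using sets.sets_into_space[OF assms] by (simp add: Collect_conj_eq Int_absorb1)
next
  case (Suc n)
  have "{x\<in>space M. (T ^^ Suc n) x \<in> A} = T -` {x\<in>space M. (T ^^ n) x \<in> A} \<inter> space M"
    using measurable_space[OF measurable_T] by (auto simp: funpow_swap1)
  moreover have "{x\<in>space M. (T ^^ n) x \<in> A} \<in> sets M" using assms by measurable
  ultimately show ?case using Suc preserving unfolding mpreserving_def by presburger
qed

lemma integrable_indicator_funpow: "A \<in> sets M \<Longrightarrow> integrable M (\<lambda>x. indicator A ((T ^^ n) x) :: real)"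
  by (rule integrable_const_bound[where B=1]) (auto simp: indicator_def)

lemma integral_indicator_funpow:
  assumes "A \<in> sets M"
  shows "(\<integral>x. indicator A ((T ^^ n) x) \<partial>M) = measure M A"
proof -
  have "(\<integral>x. indicator A ((T ^^ n) x) \<partial>M) = (\<integral>x. indicator {x\<in>space M. (T ^^ n) x \<in> A} x \<partial>M)"
    by (rule Bochner_Integration.integral_cong) (auto simp: indicator_def)
  also have "\<dots> = measure M A"
    using measure_funpow_preimage[OF assms] assms by (simp add: Collect_conj_eq Int_commute)
  finally show ?thesis .
qed

definition visits :: "'a set \<Rightarrow> nat \<Rightarrow> 'a \<Rightarrow> real" where
  "visits V L x = (\<Sum>i<L. indicator V ((T ^^ i) x))"

lemma measurable_visits[measurable]:
  assumes [measurable]: "V \<in> sets M" shows "visits V L \<in> borel_measurable M"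
  unfolding visits_def by measurable

lemma visits_nonneg: "0 \<le> visits V L x"
  unfolding visits_def by (simp add: sum_nonneg)

lemma visits_le: "visits V L x \<le> real L"
  using sum_mono[of "{..<L}" "\<lambda>i. indicator V ((T ^^ i) x)" "\<lambda>_. 1::real"]
  unfolding visits_def by (simp add: indicator_def)

lemma visits_add: "visits V (a + b) x = visits V a x + visits V b ((T ^^ a) x)"
  unfolding visits_def sum_lessThan_add_split by (simp add: funpow_add add.commute)

lemma visits_Suc: "visits V (Suc L) x = indicator V x + visits V L (T x)"
  using visits_add[of V 1 L x] by (simp add: visits_def)

lemma visits_T_close: "\<bar>visits V L (T x) - visits V L x\<bar> \<le> 1"
proof -
  have "indicator V x + visits V L (T x) = visits V L x + indicator V ((T ^^ L) x)"
    using visits_Suc[of V L x] by (simp add: visits_def)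
  then show ?thesis by (cases "x \<in> V"; cases "(T ^^ L) x \<in> V") (auto simp: indicator_def)
qed

lemma visits_compl:
  "x \<in> space M \<Longrightarrow> visits (space M - V) L x = real L - visits V L x"
proof -
  assume "x \<in> space M"
  then have "visits (space M - V) L x = (\<Sum>i<L. 1 - indicator V ((T ^^ i) x))"
    unfolding visits_def by (intro sum.cong) (auto simp: indicator_def funpow_T_space)
  then show ?thesis by (simp add: sum_subtractf visits_def)
qed

lemma integrable_visits: "V \<in> sets M \<Longrightarrow> integrable M (visits V L)"
  unfolding visits_def by (auto intro!: integrable_sum integrable_indicator_funpow)

lemma integral_visits: "V \<in> sets M \<Longrightarrow> (\<integral>x. visits V L x \<partial>M) = real L * measure M V"
  unfolding visits_def
  by (simp add: Bochner_Integration.integral_sum integrable_indicator_funpow integral_indicator_funpow)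

text \<open>The margin \<open>1 / (q + 1)\<close> is quantified over \<open>q :: nat\<close> rather than over all positive reals
  so that the set is measurable.\<close>
definition excess_set :: "'a set \<Rightarrow> real \<Rightarrow> 'a set" where
  "excess_set V a =
     {x\<in>space M. \<exists>q::nat. \<forall>n. \<exists>L\<ge>n. (a + 1 / (real q + 1)) * real L < visits V L x}"

lemma sets_excess_set[measurable]:
  assumes [measurable]: "V \<in> sets M" shows "excess_set V a \<in> sets M"
  unfolding excess_set_def by measurable

lemma excess_set_invariant: "T -` excess_set V a \<inter> space M = excess_set V a"
proof -
  have half: "1 / (real q + 1) / 2 = 1 / (real (2 * q + 1) + 1)" for q :: nat
    by (simp add: field_simps)
  have transfer: "x \<in> excess_set V a" if "y \<in> excess_set V a" "x \<in> space M"
    and close: "\<And>L. \<bar>visits V L y - visits V L x\<bar> \<le> 1" for x y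
  proof -
    obtain q :: nat where "\<And>n. \<exists>L\<ge>n. (a + 1 / (real q + 1)) * real L < visits V L y"
      using \<open>y \<in> excess_set V a\<close> unfolding excess_set_def by blast
    then have "\<exists>L\<ge>n. (a + 1 / (real (2 * q + 1) + 1)) * real L < visits V L x" for n
      using frequently_above_if_close[of "1 / (real q + 1)" "\<lambda>L. visits V L y"] close
      unfolding half by auto
    then show ?thesis unfolding excess_set_def using \<open>x \<in> space M\<close> by blast
  qed
  have "T x \<in> excess_set V a \<longleftrightarrow> x \<in> excess_set V a" if x: "x \<in> space M" for x
    using transfer[of "T x" x] transfer[of x "T x"] x measurable_space[OF measurable_T x]
      visits_T_close[of V _ x] by (auto simp: abs_minus_commute)
  moreover have "excess_set V a \<subseteq> space M" unfolding excess_set_def by auto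
  ultimately show ?thesis by auto
qed

definition bounded_windows :: "'a set \<Rightarrow> real \<Rightarrow> nat \<Rightarrow> 'a set" where
  "bounded_windows V a N = {x\<in>space M. \<forall>L\<in>{1..N}. visits V L x \<le> a * real L}"

lemma sets_bounded_windows[measurable]:
  assumes [measurable]: "V \<in> sets M" shows "bounded_windows V a N \<in> sets M"
  unfolding bounded_windows_def by measurable

lemma visits_ge_outside_bounded_windows:
  assumes "0 \<le> a" and x: "x \<in> space M"
  shows "a * (real K - real N - (\<Sum>i<K. indicator (bounded_windows V a N) ((T ^^ i) x)))
    \<le> visits V K x"
proof -
  have "\<exists>L. 1 \<le> L \<and> L \<le> N \<and> a * real L < (\<Sum>j<L. indicator V ((T ^^ (i + j)) x))"
    if outside: "(T ^^ i) x \<notin> bounded_windows V a N" for i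
  proof -
    obtain L where "L \<in> {1..N}" "a * real L < visits V L ((T ^^ i) x)"
      using outside funpow_T_space[OF x] unfolding bounded_windows_def by force
    then show ?thesis unfolding visits_def by (auto simp: funpow_add add.commute)
  qed
  from sum_ge_greedy_windows[where e = "\<lambda>i. (T ^^ i) x \<in> bounded_windows V a N" and s = 0,
      OF _ \<open>0 \<le> a\<close> this]
  show ?thesis by (simp add: visits_def indicator_def)
qed

lemma maximal_window_bound:
  assumes V[measurable]: "V \<in> sets M" and "0 \<le> a"
  shows "a * (1 - measure M (bounded_windows V a N)) \<le> measure M V"
proof -
  let ?E = "bounded_windows V a N"
  have averaged: "a * (1 - measure M ?E) - a * real N / real K \<le> measure M V" if "K \<ge> 1" for K
  proof -
    define f where "f x = (\<Sum>i<K. indicator ?E ((T ^^ i) x) :: real)" for x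
    have f: "integrable M f" "(\<integral>x. f x \<partial>M) = real K * measure M ?E"
      unfolding f_def by (auto intro!: integrable_sum integrable_indicator_funpow
        simp: Bochner_Integration.integral_sum[OF integrable_indicator_funpow] integral_indicator_funpow)
    have "integrable M (\<lambda>x. a * (real K - real N - f x))" using f(1) by auto
    then have "(\<integral>x. a * (real K - real N - f x) \<partial>M) \<le> (\<integral>x. visits V K x \<partial>M)"
      using visits_ge_outside_bounded_windows[OF \<open>0 \<le> a\<close>, of _ K N V]
      by (intro integral_mono[OF _ integrable_visits[OF V]]) (simp_all add: f_def)
    moreover have "(\<integral>x. a * (real K - real N - f x) \<partial>M) = a * (real K - real N) - a * (real K * measure M ?E)"
      using f by (simp add: right_diff_distrib prob_space)
    ultimately have "a * (real K - real N - real K * measure M ?E) \<le> real K * measure M V"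
      using integral_visits[OF V] by (simp add: algebra_simps)
    then show ?thesis using that by (simp add: field_simps)
  qed
  have "(\<lambda>K. a * (1 - measure M ?E) - a * real N / real K) \<longlonglongrightarrow> a * (1 - measure M ?E) - 0"
    by (intro tendsto_diff tendsto_const lim_const_over_n)
  then show ?thesis using averaged by (intro LIMSEQ_le_const2) auto
qed

lemma measure_excess_set_eq_0:
  assumes V[measurable]: "V \<in> sets M" and "measure M V < a"
  shows "measure M (excess_set V a) = 0"
proof (rule ccontr)
  assume "measure M (excess_set V a) \<noteq> 0"
  then have full: "measure M (excess_set V a) = 1"
    using ergodic[unfolded ergodic_map_def, rule_format, OF sets_excess_set[OF V] excess_set_invariant[of V a]]
    by simp
  have "0 \<le> a" using assms(2) measure_nonneg[of M V] by linarith
  let ?E = "bounded_windows V a"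
  have "x \<in> space M - excess_set V a" if x: "x \<in> (\<Inter>N. ?E N)" for x
  proof -
    have "x \<notin> excess_set V a"
    proof
      assume "x \<in> excess_set V a"
      then obtain q :: nat and L where L: "L \<ge> 1" "(a + 1 / (real q + 1)) * real L < visits V L x"
        unfolding excess_set_def by blast
      have "x \<in> ?E L" using x by blast
      then have "visits V L x \<le> a * real L" using L(1) unfolding bounded_windows_def by auto
      moreover have "a * real L \<le> (a + 1 / (real q + 1)) * real L" by (intro mult_right_mono) auto
      ultimately show False using L(2) by linarith
    qed
    then show ?thesis using x unfolding bounded_windows_def by auto
  qed
  then have "measure M (\<Inter>N. ?E N) \<le> measure M (space M - excess_set V a)"
    by (intro finite_measure_mono) auto
  then have "measure M (\<Inter>N. ?E N) = 0"
    using prob_compl[OF sets_excess_set[OF V]] full by (simp add: antisym)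
  moreover have "range ?E \<subseteq> sets M" using sets_bounded_windows[OF V] by blast
  moreover have "decseq ?E" unfolding decseq_def bounded_windows_def by auto
  ultimately have "(\<lambda>N. measure M (?E N)) \<longlonglongrightarrow> 0"
    using finite_Lim_measure_decseq[of ?E] by simp
  then have "(\<lambda>N. a * (1 - measure M (?E N))) \<longlonglongrightarrow> a * (1 - 0)"
    by (intro tendsto_intros)
  then have "a \<le> measure M V"
    using maximal_window_bound[OF V \<open>0 \<le> a\<close>] by (intro LIMSEQ_le_const2) auto
  then show False using assms(2) by simp
qed

lemma AE_visit_frequency_tendsto:
  assumes V[measurable]: "V \<in> sets M"
  shows "AE x in M. (\<lambda>L. visits V L x / real L) \<longlonglongrightarrow> measure M V"
proof -
  have "AE x in M. \<forall>q::nat. x \<notin> excess_set V (measure M V + 1 / (real q + 1)) \<and>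
      x \<notin> excess_set (space M - V) (measure M (space M - V) + 1 / (real q + 1))"
    unfolding AE_all_countable
    by (intro allI AE_conjI AE_not_in) (auto simp: null_sets_def emeasure_eq_measure measure_excess_set_eq_0)
  with AE_space show ?thesis
  proof eventually_elim
    fix x assume x: "x \<in> space M" and not_excess: "\<forall>q::nat.
      x \<notin> excess_set V (measure M V + 1 / (real q + 1)) \<and>
      x \<notin> excess_set (space M - V) (measure M (space M - V) + 1 / (real q + 1))"
    show "(\<lambda>L. visits V L x / real L) \<longlonglongrightarrow> measure M V"
    proof (rule LIMSEQ_I)
      fix r :: real assume "0 < r"
      then obtain q :: nat where "inverse (real (Suc q)) < r / 2"
        using reals_Archimedean[of "r / 2"] by auto
      then have r: "2 / (real q + 1) < r" by (simp add: field_simps)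
      define \<delta> where "\<delta> = 1 / (real q + 1)"
      have "\<not> (\<forall>n. \<exists>L\<ge>n. (measure M V + \<delta> + \<delta>) * real L < visits V L x)"
        "\<not> (\<forall>n. \<exists>L\<ge>n. (1 - measure M V + \<delta> + \<delta>) * real L < visits (space M - V) L x)"
        using not_excess[rule_format, of q] x unfolding excess_set_def \<delta>_def prob_compl[OF V]
        by blast+
      then obtain n1 n2 where
        n1: "\<And>L. L \<ge> n1 \<Longrightarrow> visits V L x \<le> (measure M V + 2 * \<delta>) * real L" and
        n2: "\<And>L. L \<ge> n2 \<Longrightarrow> visits (space M - V) L x \<le> (1 - measure M V + 2 * \<delta>) * real L"
        by (auto simp: not_less algebra_simps)
      have "\<bar>visits V L x / real L - measure M V\<bar> < r" if L: "L \<ge> Suc (max n1 n2)" for L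
      proof -
        have "visits V L x \<le> (measure M V + 2 * \<delta>) * real L"
          "real L - visits V L x \<le> (1 - measure M V + 2 * \<delta>) * real L"
          using n1 n2 L visits_compl[OF x] by auto
        then have "\<bar>visits V L x / real L - measure M V\<bar> \<le> 2 * \<delta>"
          using L by (simp add: abs_le_iff field_simps)
        then show ?thesis using r unfolding \<delta>_def by simp
      qed
      then show "\<exists>n0. \<forall>L\<ge>n0. norm (visits V L x / real L - measure M V) < r" by auto
    qed
  qed
qed

definition visit_deviation :: "'a set \<Rightarrow> nat \<Rightarrow> real" where
  "visit_deviation V L = (\<integral>x. \<bar>visits V L x / real L - measure M V\<bar> \<partial>M)"

lemma visit_deviation_nonneg: "0 \<le> visit_deviation V L"
  unfolding visit_deviation_def by simp

lemma visit_deviation_tendsto_0: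
  assumes V[measurable]: "V \<in> sets M"
  shows "(\<lambda>L. visit_deviation V L) \<longlonglongrightarrow> 0"
proof -
  have "(\<lambda>L. \<integral>x. \<bar>visits V L x / real L - measure M V\<bar> \<partial>M) \<longlonglongrightarrow> (\<integral>x. 0 \<partial>M)"
  proof (rule integral_dominated_convergence[where w = "\<lambda>_. 1"])
    show "AE x in M. (\<lambda>L. \<bar>visits V L x / real L - measure M V\<bar>) \<longlonglongrightarrow> 0"
      using AE_visit_frequency_tendsto[OF V] by eventually_elim (auto intro: tendsto_rabs_zero LIM_zero)
    show "AE x in M. norm \<bar>visits V L x / real L - measure M V\<bar> \<le> 1" for L
    proof (rule AE_I2)
      fix x
      have "0 \<le> visits V L x / real L" "visits V L x / real L \<le> 1"
        using visits_nonneg[of V L x] visits_le[of V L x] by (auto simp: divide_le_eq)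
      then show "norm \<bar>visits V L x / real L - measure M V\<bar> \<le> 1"
        unfolding real_norm_def abs_abs abs_le_iff using measure_nonneg[of M V] prob_le_1[of V]
        by linarith
    qed
  qed auto
  then show ?thesis unfolding visit_deviation_def by simp
qed

lemma integral_abs_visits_deviation:
  "(\<integral>x. \<bar>visits V L x - real L * measure M V\<bar> \<partial>M) = real L * visit_deviation V L"
proof (cases "L = 0")
  case False
  then have "\<bar>visits V L x - real L * measure M V\<bar> = real L * \<bar>visits V L x / real L - measure M V\<bar>" for x
    by (simp add: field_simps flip: abs_mult)
  then show ?thesis unfolding visit_deviation_def by simp
qed (simp add: visits_def visit_deviation_def)

lemma AE_visits_infinitely_often:
  assumes U[measurable]: "U \<in> sets M" and "measure M U > 0"
  shows "AE x in M. \<forall>n. \<exists>j>n. (T ^^ j) x \<in> U"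
  using AE_visit_frequency_tendsto[OF U]
proof eventually_elim
  fix x assume freq: "(\<lambda>L. visits U L x / real L) \<longlonglongrightarrow> measure M U"
  show "\<forall>n. \<exists>j>n. (T ^^ j) x \<in> U"
  proof (rule ccontr)
    assume "\<not> (\<forall>n. \<exists>j>n. (T ^^ j) x \<in> U)"
    then obtain n where n: "\<And>j. j > n \<Longrightarrow> (T ^^ j) x \<notin> U" by auto
    have "visits U L x \<le> real (Suc n)" for L
    proof -
      have "visits U L x = (\<Sum>i\<in>{..<L} \<inter> {..n}. indicator U ((T ^^ i) x))"
        unfolding visits_def using n
        by (intro sum.mono_neutral_right) (auto simp: indicator_def not_le)
      also have "\<dots> \<le> (\<Sum>i\<le>n. indicator U ((T ^^ i) x))" by (intro sum_mono2) auto
      also have "\<dots> \<le> (\<Sum>i\<le>n. 1)" by (intro sum_mono) (auto simp: indicator_def)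
      finally show ?thesis by simp
    qed
    then have "visits U L x / real L \<le> real (Suc n) / real L" for L
      by (intro divide_right_mono) auto
    then have "(\<lambda>L. visits U L x / real L) \<longlonglongrightarrow> 0"
      using visits_nonneg
      by (intro tendsto_sandwich[OF _ _ tendsto_const lim_const_over_n[of "real (Suc n)"]]) auto
    with freq have "measure M U = 0" using LIMSEQ_unique by blast
    then show False using \<open>measure M U > 0\<close> by simp
  qed
qed

lemma measurable_induced_map[measurable]:
  assumes [measurable]: "U \<in> sets M" shows "induced_map T U \<in> measurable M M"
proof -
  have "induced_map T U = (\<lambda>x. if \<exists>j\<ge>1. (T ^^ j) x \<in> U
      then (T ^^ (LEAST j. j \<ge> 1 \<and> (T ^^ j) x \<in> U)) x else x)"
    unfolding induced_map_def entry_time_def by (rule ext) auto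
  moreover have "(\<lambda>x. (T ^^ (LEAST j. j \<ge> 1 \<and> (T ^^ j) x \<in> U)) x) \<in> measurable M M"
    by (rule measurable_compose_countable[OF measurable_funpow_T]) measurable
  ultimately show ?thesis by (auto intro: measurable_If)
qed

lemma measurable_funpow_induced_map[measurable]:
  assumes [measurable]: "U \<in> sets M" shows "(induced_map T U ^^ n) \<in> measurable M M"
  by (induction n) (auto simp: funpow_Suc_right)

definition no_entry :: "'a set \<Rightarrow> nat \<Rightarrow> 'a set" where
  "no_entry B m = {x\<in>space M. \<forall>j\<in>{1..m}. (T ^^ j) x \<notin> B}"

definition no_induced_entry :: "'a set \<Rightarrow> 'a set \<Rightarrow> nat \<Rightarrow> 'a set" where
  "no_induced_entry U B n = {x\<in>U \<inter> space M. \<forall>k\<in>{1..n}. (induced_map T U ^^ k) x \<notin> B}"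

lemma sets_no_entry[measurable]:
  assumes [measurable]: "B \<in> sets M" shows "no_entry B m \<in> sets M"
  unfolding no_entry_def by measurable

lemma sets_no_induced_entry[measurable]:
  assumes [measurable]: "U \<in> sets M" "B \<in> sets M" shows "no_induced_entry U B n \<in> sets M"
  unfolding no_induced_entry_def by measurable

lemma measure_hit_le:
  assumes [measurable]: "B \<in> sets M" and "finite J"
  shows "measure M {x\<in>space M. \<exists>j\<in>J. (T ^^ j) x \<in> B} \<le> real (card J) * measure M B"
proof -
  have "{x\<in>space M. \<exists>j\<in>J. (T ^^ j) x \<in> B} = (\<Union>j\<in>J. {x\<in>space M. (T ^^ j) x \<in> B})" by auto
  then have "measure M {x\<in>space M. \<exists>j\<in>J. (T ^^ j) x \<in> B}
      \<le> (\<Sum>j\<in>J. measure M {x\<in>space M. (T ^^ j) x \<in> B})"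
    using \<open>finite J\<close> by (auto intro!: measure_UNION_le)
  then show ?thesis by (simp add: measure_funpow_preimage)
qed

lemma measure_no_entry_le:
  assumes B[measurable]: "B \<in> sets M" and "m \<le> m'"
  shows "measure M (no_entry B m) \<le> measure M (no_entry B m') + real (m' - m) * measure M B"
proof -
  let ?H = "{x\<in>space M. \<exists>j\<in>{m<..m'}. (T ^^ j) x \<in> B}"
  have "no_entry B m \<subseteq> no_entry B m' \<union> ?H"
    unfolding no_entry_def by (auto simp: not_le)
  then have "measure M (no_entry B m) \<le> measure M (no_entry B m' \<union> ?H)"
    by (intro finite_measure_mono) auto
  also have "\<dots> \<le> measure M (no_entry B m') + measure M ?H"
    by (intro measure_Un_le) auto
  finally show ?thesis using measure_hit_le[OF B, of "{m<..m'}"] by simp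
qed

lemma visits_before_first_return:
  assumes "1 \<le> r" "(T ^^ r) x \<in> U" "\<And>j. 1 \<le> j \<Longrightarrow> j < r \<Longrightarrow> (T ^^ j) x \<notin> U" "j \<le> r"
  shows "visits U j (T x) = of_bool (j = r)"
proof -
  have "(T ^^ i) (T x) \<in> U \<longleftrightarrow> i = r - 1" if "i < j" for i
  proof -
    have "(T ^^ i) (T x) = (T ^^ Suc i) x" by (simp add: funpow_swap1)
    then show ?thesis using assms(3)[of "Suc i"] assms(1,2,4) that by (cases "Suc i = r") auto
  qed
  then have "visits U j (T x) = (\<Sum>i<j. if i = r - 1 then 1 else 0)"
    unfolding visits_def by (intro sum.cong) (auto simp: indicator_def)
  then show ?thesis using assms(1,4) by auto
qed

text \<open>\<open>visits U m (T x)\<close> counts the returns to \<open>U\<close> at times \<open>1, \<dots>, m\<close>.\<close>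
lemma no_entry_iff_no_induced_entry:
  assumes "B \<subseteq> U" and "\<forall>n. \<exists>j>n. (T ^^ j) x \<in> U"
  shows "(\<forall>j\<in>{1..m}. (T ^^ j) x \<notin> B) \<longleftrightarrow>
    (\<forall>k. 1 \<le> k \<and> real k \<le> visits U m (T x) \<longrightarrow> (induced_map T U ^^ k) x \<notin> B)"
  using assms(2)
proof (induction m arbitrary: x rule: less_induct)
  case (less m x)
  have "\<exists>j. j \<ge> 1 \<and> (T ^^ j) x \<in> U" using less.prems[rule_format, of 0] by (auto simp: Suc_le_eq)
  define r where "r = (LEAST j. j \<ge> 1 \<and> (T ^^ j) x \<in> U)"
  have r: "r \<ge> 1" "(T ^^ r) x \<in> U" using LeastI_ex[OF \<open>\<exists>j. _\<close>] unfolding r_def by auto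
  have before_r: "(T ^^ j) x \<notin> U" if "1 \<le> j" "j < r" for j
    using not_less_Least[of j "\<lambda>j. j \<ge> 1 \<and> (T ^^ j) x \<in> U"] that unfolding r_def by blast
  define y where "y = (T ^^ r) x"
  have induced_x: "induced_map T U x = y"
    using \<open>\<exists>j. _\<close> unfolding induced_map_def entry_time_def r_def y_def by auto
  have shift: "(T ^^ (j - r)) y = (T ^^ j) x" if "r \<le> j" for j
    using that by (simp add: y_def flip: funpow_add comp_apply[of "T ^^ _" "T ^^ _"])
  show ?case
  proof (cases "m < r")
    case True
    then show ?thesis
      using visits_before_first_return[OF r before_r, of m] before_r \<open>B \<subseteq> U\<close> by auto
  next
    case False
    have "\<forall>n. \<exists>j>n. (T ^^ j) y \<in> U"
    proof
      fix n
      obtain j where "j > n + r" "(T ^^ j) x \<in> U" using less.prems by blast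
      then show "\<exists>j>n. (T ^^ j) y \<in> U" using shift[of j] by (intro exI[of _ "j - r"]) auto
    qed
    then have IH: "(\<forall>j\<in>{1..m - r}. (T ^^ j) y \<notin> B) \<longleftrightarrow>
      (\<forall>k. 1 \<le> k \<and> real k \<le> visits U (m - r) (T y) \<longrightarrow> (induced_map T U ^^ k) y \<notin> B)"
      using less.IH[of "m - r" y] r False by simp
    have "visits U m (T x) = visits U r (T x) + visits U (m - r) ((T ^^ r) (T x))"
      using visits_add[of U r "m - r" "T x"] False by simp
    then have "visits U m (T x) = 1 + visits U (m - r) (T y)"
      using visits_before_first_return[OF r before_r, of r] by (simp add: y_def funpow_swap1)
    then have "(\<forall>k. 1 \<le> k \<and> real k \<le> visits U m (T x) \<longrightarrow> (induced_map T U ^^ k) x \<notin> B) \<longleftrightarrow>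
      y \<notin> B \<and> (\<forall>k. 1 \<le> k \<and> real k \<le> visits U (m - r) (T y) \<longrightarrow> (induced_map T U ^^ k) y \<notin> B)"
      using orbit_avoids_iff_first_step_and_shifted[of "visits U (m - r) (T y)" "induced_map T U" x B]
        visits_nonneg induced_x by simp
    moreover have "(\<forall>j\<in>{1..m}. (T ^^ j) x \<notin> B) \<longleftrightarrow> y \<notin> B \<and> (\<forall>j\<in>{1..m - r}. (T ^^ j) y \<notin> B)"
      using orbit_avoids_iff_split_at_first_return[OF \<open>B \<subseteq> U\<close> r(1) _ before_r] False
      unfolding y_def by simp
    ultimately show ?thesis using IH by blast
  qed
qed

lemma measure_no_entry_le_no_induced_entry:
  assumes U[measurable]: "U \<in> sets M" and B[measurable]: "B \<in> sets M" and "B \<subseteq> U"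
    and "measure M U > 0"
  shows "measure M (U \<inter> no_entry B m)
    \<le> measure M (no_induced_entry U B n) + measure M {x\<in>space M. visits U m (T x) < real n}"
proof -
  have "AE x in M. x \<in> U \<inter> no_entry B m \<longrightarrow>
      x \<in> no_induced_entry U B n \<union> {x\<in>space M. visits U m (T x) < real n}"
    using AE_visits_infinitely_often[OF U \<open>measure M U > 0\<close>]
  proof eventually_elim
    case (elim x)
    then show ?case
      using no_entry_iff_no_induced_entry[OF \<open>B \<subseteq> U\<close> elim, of m]
      unfolding no_entry_def no_induced_entry_def by (auto simp: not_less)
  qed
  then have "measure M (U \<inter> no_entry B m)
      \<le> measure M (no_induced_entry U B n \<union> {x\<in>space M. visits U m (T x) < real n})"
    by (intro finite_measure_mono_AE) auto
  also have "\<dots> \<le> measure M (no_induced_entry U B n) + measure M {x\<in>space M. visits U m (T x) < real n}"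
    by (intro measure_Un_le) auto
  finally show ?thesis .
qed

lemma measure_no_induced_entry_le_no_entry:
  assumes U[measurable]: "U \<in> sets M" and B[measurable]: "B \<in> sets M" and "B \<subseteq> U"
    and "measure M U > 0"
  shows "measure M (no_induced_entry U B n)
    \<le> measure M (U \<inter> no_entry B m) + measure M {x\<in>space M. real n < visits U m (T x)}"
proof -
  have "AE x in M. x \<in> no_induced_entry U B n \<longrightarrow>
      x \<in> (U \<inter> no_entry B m) \<union> {x\<in>space M. real n < visits U m (T x)}"
    using AE_visits_infinitely_often[OF U \<open>measure M U > 0\<close>] AE_space
  proof eventually_elim
    case (elim x)
    then show ?case
      using no_entry_iff_no_induced_entry[OF \<open>B \<subseteq> U\<close> elim(1), of m]
      unfolding no_entry_def no_induced_entry_def by (force simp: not_less)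
  qed
  then have "measure M (no_induced_entry U B n)
      \<le> measure M ((U \<inter> no_entry B m) \<union> {x\<in>space M. real n < visits U m (T x)})"
    by (intro finite_measure_mono_AE) auto
  also have "\<dots> \<le> measure M (U \<inter> no_entry B m) + measure M {x\<in>space M. real n < visits U m (T x)}"
    by (intro measure_Un_le) auto
  finally show ?thesis .
qed

lemma measure_no_entry_shift_close:
  assumes U[measurable]: "U \<in> sets M" and B[measurable]: "B \<in> sets M"
  shows "\<bar>measure M (U \<inter> no_entry B m) - measure M {x\<in>no_entry B m. (T ^^ i) x \<in> U}\<bar>
    \<le> real i * measure M B"
proof -
  define X where "X = {x\<in>space M. (T ^^ i) x \<in> U \<inter> no_entry B m}"
  define W where "W = {x\<in>no_entry B m. (T ^^ i) x \<in> U}"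
  define Z where "Z = {x\<in>space M. (T ^^ i) x \<in> U \<and> (\<forall>j\<in>{1..m + i}. (T ^^ j) x \<notin> B)}"
  define H1 where "H1 = {x\<in>space M. \<exists>j\<in>{1..i}. (T ^^ j) x \<in> B}"
  define H2 where "H2 = {x\<in>space M. \<exists>j\<in>{m<..m + i}. (T ^^ j) x \<in> B}"
  have [measurable]: "X \<in> sets M" "W \<in> sets M" "Z \<in> sets M" "H1 \<in> sets M" "H2 \<in> sets M"
    unfolding X_def W_def Z_def H1_def H2_def no_entry_def by measurable
  have shift: "(T ^^ j) ((T ^^ i) x) = (T ^^ (j + i)) x" for j x by (simp add: funpow_add)
  have ZX: "Z \<subseteq> X" unfolding X_def Z_def no_entry_def by (auto simp: shift funpow_T_space)
  have XZ: "X \<subseteq> Z \<union> H1"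
  proof
    fix x assume x: "x \<in> X"
    have "(T ^^ j) x \<notin> B" if "j \<in> {1..m + i}" "x \<notin> H1" for j
    proof (cases "j \<le> i")
      case False
      then have "j - i \<in> {1..m}" "j - i + i = j" using that(1) by auto
      moreover have "(T ^^ (j - i)) ((T ^^ i) x) \<notin> B"
        using x \<open>j - i \<in> {1..m}\<close> unfolding X_def no_entry_def by blast
      ultimately show ?thesis using shift[of "j - i" x] by simp
    qed (use that x in \<open>auto simp: H1_def X_def\<close>)
    then show "x \<in> Z \<union> H1" using x unfolding X_def Z_def by auto
  qed
  have "measure M Z \<le> measure M X" "measure M X \<le> measure M Z + measure M H1"
    using ZX XZ by (auto intro!: finite_measure_mono order.trans[OF _ measure_Un_le])
  moreover have "Z \<subseteq> W" "W \<subseteq> Z \<union> H2"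
    unfolding W_def Z_def H2_def no_entry_def by (auto simp: not_le)
  then have "measure M Z \<le> measure M W" "measure M W \<le> measure M Z + measure M H2"
    by (auto intro!: finite_measure_mono order.trans[OF _ measure_Un_le])
  moreover have "measure M X = measure M (U \<inter> no_entry B m)"
    unfolding X_def by (intro measure_funpow_preimage) measurable
  moreover have "measure M H1 \<le> real i * measure M B" "measure M H2 \<le> real i * measure M B"
    unfolding H1_def H2_def
    using measure_hit_le[OF B, of "{1..i}"] measure_hit_le[OF B, of "{m<..m + i}"] by auto
  ultimately show ?thesis unfolding W_def by (simp add: abs_le_iff)
qed

lemma integral_indicator_times_visits:
  assumes [measurable]: "E \<in> sets M" "U \<in> sets M"
  shows "(\<integral>x. indicator E x * visits U L x \<partial>M) = (\<Sum>i<L. measure M {x\<in>E. (T ^^ i) x \<in> U})"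
proof -
  have "(\<integral>x. indicator E x * visits U L x \<partial>M)
      = (\<Sum>i<L. \<integral>x. indicator E x * indicator U ((T ^^ i) x) \<partial>M)"
    unfolding visits_def sum_distrib_left
    by (intro Bochner_Integration.integral_sum integrable_const_bound[where B = 1])
      (auto simp: indicator_def)
  also have "\<dots> = (\<Sum>i<L. measure M {x\<in>E. (T ^^ i) x \<in> U})"
  proof (intro sum.cong refl)
    fix i
    have "indicator E x * indicator U ((T ^^ i) x) = (indicator {x\<in>E. (T ^^ i) x \<in> U} x :: real)"
      for x by (auto simp: indicator_def)
    moreover have "{x\<in>E. (T ^^ i) x \<in> U} \<in> sets M" by measurable
    ultimately show "(\<integral>x. indicator E x * indicator U ((T ^^ i) x) \<partial>M) = measure M {x\<in>E. (T ^^ i) x \<in> U}"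
      by simp
  qed
  finally show ?thesis .
qed

lemma integral_indicator_times_visits_close:
  assumes E[measurable]: "E \<in> sets M" and U[measurable]: "U \<in> sets M"
  shows "\<bar>(\<integral>x. indicator E x * visits U L x \<partial>M) - real L * measure M U * measure M E\<bar>
    \<le> real L * visit_deviation U L"
proof -
  have int: "integrable M (\<lambda>x. indicator E x * visits U L x :: real)"
    "integrable M (\<lambda>x. indicator E x * (real L * measure M U) :: real)"
    by (auto intro!: integrable_const_bound[where B = "real L"]
        simp: indicator_def visits_le visits_nonneg abs_of_nonneg)
  then have int_diff: "integrable M (\<lambda>x. indicator E x * (visits U L x - real L * measure M U))"
    by (simp add: right_diff_distrib)
  have "real L * measure M U * measure M E = (\<integral>x. indicator E x * (real L * measure M U) \<partial>M)"
    by simp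
  then have "\<bar>(\<integral>x. indicator E x * visits U L x \<partial>M) - real L * measure M U * measure M E\<bar>
      = \<bar>\<integral>x. indicator E x * (visits U L x - real L * measure M U) \<partial>M\<bar>"
    using int by (simp add: right_diff_distrib ac_simps)
  also have "\<dots> \<le> (\<integral>x. \<bar>visits U L x - real L * measure M U\<bar> \<partial>M)"
    using int_diff integrable_visits[OF U, of L]
    by (intro order.trans[OF integral_abs_bound] integral_mono) (auto simp: indicator_def)
  finally show ?thesis unfolding integral_abs_visits_deviation .
qed

text \<open>Averaging the shifted sets \<open>{x \<in> E. T\<^sup>i x \<in> U}\<close> over \<open>i < L\<close> turns \<open>\<mu>(U \<inter> E)\<close> into
  \<open>\<integral>\<^sub>E visits U L / L\<close>, which the ergodic theorem brings close to \<open>\<mu> U \<mu> E\<close>.\<close>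
lemma no_entry_decorrelation:
  assumes U[measurable]: "U \<in> sets M" and B[measurable]: "B \<in> sets M" and "1 \<le> L"
  shows "\<bar>measure M (U \<inter> no_entry B m) - measure M U * measure M (no_entry B m)\<bar>
    \<le> real L * measure M B + visit_deviation U L"
proof -
  let ?E = "no_entry B m"
  have "\<bar>measure M (U \<inter> ?E) - measure M {x\<in>?E. (T ^^ i) x \<in> U}\<bar> \<le> real L * measure M B"
    if "i < L" for i
    using measure_no_entry_shift_close[OF U B, of m i] mult_right_mono[of "real i" "real L" "measure M B"] that
    by simp
  then have "\<bar>\<Sum>i<L. measure M (U \<inter> ?E) - measure M {x\<in>?E. (T ^^ i) x \<in> U}\<bar>
      \<le> (\<Sum>i<L. real L * measure M B)"
    by (intro order.trans[OF sum_abs] sum_mono) auto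
  then have "\<bar>real L * measure M (U \<inter> ?E) - (\<integral>x. indicator ?E x * visits U L x \<partial>M)\<bar>
      \<le> real L * (real L * measure M B)"
    by (simp add: sum_subtractf integral_indicator_times_visits)
  then have "\<bar>real L * measure M (U \<inter> ?E) - real L * (measure M U * measure M ?E)\<bar>
      \<le> real L * (real L * measure M B + visit_deviation U L)"
    using integral_indicator_times_visits_close[OF sets_no_entry[OF B, of m] U, of L]
    unfolding abs_le_iff by (simp add: algebra_simps)
  then show ?thesis using \<open>1 \<le> L\<close> by (simp add: abs_mult flip: right_diff_distrib)
qed

lemma measure_no_induced_entry_upper:
  assumes U[measurable]: "U \<in> sets M" and B[measurable]: "B \<in> sets M" and "B \<subseteq> U"
    and "measure M U > 0" and "1 \<le> L" and "m \<le> k"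
  shows "measure M (no_induced_entry U B n)
    \<le> measure M U * measure M (no_entry B k) + measure M U * (real (k - m) * measure M B)
      + real L * measure M B + visit_deviation U L
      + measure M {x\<in>space M. real n < visits U m (T x)}"
proof -
  have "measure M U * measure M (no_entry B m)
      \<le> measure M U * (measure M (no_entry B k) + real (k - m) * measure M B)"
    using measure_no_entry_le[OF B \<open>m \<le> k\<close>] by (intro mult_left_mono) auto
  then show ?thesis
    using measure_no_induced_entry_le_no_entry[OF U B \<open>B \<subseteq> U\<close> \<open>measure M U > 0\<close>, of n m]
      no_entry_decorrelation[OF U B \<open>1 \<le> L\<close>, of m]
    by (simp add: abs_le_iff algebra_simps)
qed

lemma measure_no_induced_entry_lower:
  assumes U[measurable]: "U \<in> sets M" and B[measurable]: "B \<in> sets M" and "B \<subseteq> U"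
    and "measure M U > 0" and "1 \<le> L" and "k \<le> m"
  shows "measure M U * measure M (no_entry B k)
    \<le> measure M (no_induced_entry U B n) + measure M U * (real (m - k) * measure M B)
      + real L * measure M B + visit_deviation U L
      + measure M {x\<in>space M. visits U m (T x) < real n}"
proof -
  have "measure M U * measure M (no_entry B k)
      \<le> measure M U * (measure M (no_entry B m) + real (m - k) * measure M B)"
    using measure_no_entry_le[OF B \<open>k \<le> m\<close>] by (intro mult_left_mono) auto
  then show ?thesis
    using measure_no_entry_le_no_induced_entry[OF U B \<open>B \<subseteq> U\<close> \<open>measure M U > 0\<close>, of m n]
      no_entry_decorrelation[OF U B \<open>1 \<le> L\<close>, of m]
    by (simp add: abs_le_iff algebra_simps)
qed

lemma measure_visits_far_from_mean:
  assumes U[measurable]: "U \<in> sets M" and "0 < a"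
  shows "measure M {x\<in>space M. a \<le> \<bar>visits U m x - real m * measure M U\<bar>} \<le> real m * visit_deviation U m / a"
proof -
  have "integrable M (\<lambda>x. \<bar>visits U m x - real m * measure M U\<bar>)"
    using integrable_visits[OF U, of m] by auto
  from integral_Markov_inequality_measure[OF this _ _ \<open>0 < a\<close>, of "space M"]
  show ?thesis by (simp add: integral_abs_visits_deviation)
qed

lemma measure_visits_T_below:
  assumes U[measurable]: "U \<in> sets M" and "0 < a" and "a \<le> real m * measure M U - real n - 1"
  shows "measure M {x\<in>space M. visits U m (T x) < real n} \<le> real m * visit_deviation U m / a"
proof -
  have "{x\<in>space M. visits U m (T x) < real n}
      \<subseteq> {x\<in>space M. a \<le> \<bar>visits U m x - real m * measure M U\<bar>}"
  proof safe
    fix x assume "visits U m (T x) < real n"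
    then show "a \<le> \<bar>visits U m x - real m * measure M U\<bar>"
      using visits_T_close[of U m x] abs_ge_minus_self[of "visits U m x - real m * measure M U"]
        assms(3) unfolding abs_le_iff by linarith
  qed
  then have "measure M {x\<in>space M. visits U m (T x) < real n}
      \<le> measure M {x\<in>space M. a \<le> \<bar>visits U m x - real m * measure M U\<bar>}"
    by (intro finite_measure_mono) measurable
  then show ?thesis using measure_visits_far_from_mean[OF U \<open>0 < a\<close>, of m] by linarith
qed

lemma measure_visits_T_above:
  assumes U[measurable]: "U \<in> sets M" and "0 < a" and "a \<le> real n - 1 - real m * measure M U"
  shows "measure M {x\<in>space M. real n < visits U m (T x)} \<le> real m * visit_deviation U m / a"
proof -
  have "{x\<in>space M. real n < visits U m (T x)}
      \<subseteq> {x\<in>space M. a \<le> \<bar>visits U m x - real m * measure M U\<bar>}"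
  proof safe
    fix x assume "real n < visits U m (T x)"
    then show "a \<le> \<bar>visits U m x - real m * measure M U\<bar>"
      using visits_T_close[of U m x] abs_ge_self[of "visits U m x - real m * measure M U"]
        assms(3) unfolding abs_le_iff by linarith
  qed
  then have "measure M {x\<in>space M. real n < visits U m (T x)}
      \<le> measure M {x\<in>space M. a \<le> \<bar>visits U m x - real m * measure M U\<bar>}"
    by (intro finite_measure_mono) measurable
  then show ?thesis using measure_visits_far_from_mean[OF U \<open>0 < a\<close>, of m] by linarith
qed

lemma no_induced_entry_estimate:
  assumes U[measurable]: "U \<in> sets M" and B[measurable]: "B \<in> sets M" and "B \<subseteq> U"
    and "measure M U > 0" and "measure M B > 0" and "1 \<le> L" and "0 < \<epsilon>" "\<epsilon> \<le> 1 / 2"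
    and "measure M B \<le> t" and "4 * measure M B \<le> \<epsilon> * t * measure M U"
  shows "\<bar>measure M (no_induced_entry U B (nat \<lfloor>t * measure M U / measure M B\<rfloor>))
      - measure M U * measure M (no_entry B (nat \<lfloor>t / measure M B\<rfloor>))\<bar>
    \<le> measure M U * (\<epsilon> * t + 2 * measure M B) + real L * measure M B + visit_deviation U L
      + 6 / (\<epsilon> * measure M U) * (visit_deviation U (nat \<lfloor>(1 - \<epsilon>) * t / measure M B\<rfloor>)
        + visit_deviation U (nat \<lceil>(1 + \<epsilon>) * t / measure M B\<rceil>))"
proof -
  define c b where "c = measure M U" and "b = measure M B"
  define s where "s = t / b"
  define k n m1 m2 where "k = nat \<lfloor>s\<rfloor>" and "n = nat \<lfloor>s * c\<rfloor>"
    and "m1 = nat \<lfloor>(1 - \<epsilon>) * s\<rfloor>" and "m2 = nat \<lceil>(1 + \<epsilon>) * s\<rceil>"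
  define A where "A = \<epsilon> * s * c / 2"
  have c: "0 < c" "c \<le> 1" and "0 < b" using assms(4,5) unfolding c_def b_def by auto
  have "t = s * b" "1 \<le> s" using assms(9) \<open>0 < b\<close> unfolding s_def b_def by (auto simp: field_simps)
  have "4 \<le> \<epsilon> * s * c" using assms(10) \<open>t = s * b\<close> \<open>0 < b\<close> unfolding c_def b_def
    by (simp add: mult.commute mult.left_commute)
  then have "0 < A" "A \<le> \<epsilon> * s * c - 2" unfolding A_def by (auto simp: ac_simps)
  note rounding = rounded_window_bounds[OF \<open>1 \<le> s\<close> \<open>0 < \<epsilon>\<close> \<open>\<epsilon> \<le> 1 / 2\<close> \<open>0 < c\<close>,
      folded k_def n_def m1_def m2_def]
  have gaps: "real (k - m1) * b \<le> \<epsilon> * t + 2 * b" "real (m2 - k) * b \<le> \<epsilon> * t + 2 * b"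
    using mult_right_mono[OF rounding(3), of b] mult_right_mono[OF rounding(4), of b]
      \<open>0 < b\<close> \<open>t = s * b\<close> by (simp_all add: algebra_simps)
  have scaled: "real m * visit_deviation U m / A \<le> 6 / (\<epsilon> * c) * visit_deviation U m"
    if "real m \<le> 3 * s" for m
  proof -
    have "real m * visit_deviation U m / A \<le> 3 * s * visit_deviation U m / A"
      using that \<open>0 < A\<close> visit_deviation_nonneg[of U m] by (intro divide_right_mono mult_right_mono) auto
    then show ?thesis using \<open>0 < A\<close> \<open>1 \<le> s\<close> c unfolding A_def by (simp add: field_simps)
  qed
  have above: "measure M {x\<in>space M. real n < visits U m1 (T x)} \<le> 6 / (\<epsilon> * c) * visit_deviation U m1"
    using measure_visits_T_above[OF U \<open>0 < A\<close>, of n m1] scaled[OF rounding(5)] rounding(7) \<open>A \<le> _\<close>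
    unfolding c_def by linarith
  have below: "measure M {x\<in>space M. visits U m2 (T x) < real n} \<le> 6 / (\<epsilon> * c) * visit_deviation U m2"
    using measure_visits_T_below[OF U \<open>0 < A\<close>, of m2 n] scaled[OF rounding(6)] rounding(8) \<open>A \<le> _\<close>
    unfolding c_def by linarith
  have "0 \<le> 6 / (\<epsilon> * c) * visit_deviation U m1" "0 \<le> 6 / (\<epsilon> * c) * visit_deviation U m2"
    using c \<open>0 < \<epsilon>\<close> visit_deviation_nonneg by auto
  moreover note
    measure_no_induced_entry_upper[OF U B \<open>B \<subseteq> U\<close> assms(4,6) rounding(1), of n, folded c_def b_def]
    measure_no_induced_entry_lower[OF U B \<open>B \<subseteq> U\<close> assms(4,6) rounding(2), of n, folded c_def b_def]
    mult_left_mono[OF gaps(1), of c] mult_left_mono[OF gaps(2), of c]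
  ultimately have "\<bar>measure M (no_induced_entry U B n) - c * measure M (no_entry B k)\<bar>
      \<le> c * (\<epsilon> * t + 2 * b) + real L * b + visit_deviation U L
        + 6 / (\<epsilon> * c) * (visit_deviation U m1 + visit_deviation U m2)"
    using above below c by (intro abs_leI) (simp_all add: algebra_simps)
  moreover have "t * c / b = s * c" "t / b = s" "(1 - \<epsilon>) * t / b = (1 - \<epsilon>) * s"
    "(1 + \<epsilon>) * t / b = (1 + \<epsilon>) * s"
    unfolding s_def by simp_all
  ultimately show ?thesis unfolding k_def n_def m1_def m2_def c_def b_def by simp
qed

lemma no_induced_entry_minus_no_entry_tendsto_0:
  assumes U[measurable]: "U \<in> sets M" and "measure M U > 0"
    and B[measurable]: "\<And>j. B j \<in> sets M" and "\<And>j. B j \<subseteq> U" and "\<And>j. measure M (B j) > 0"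
    and B_small: "(\<lambda>j. measure M (B j)) \<longlonglongrightarrow> 0" and "t > 0"
  shows "(\<lambda>j. measure M (no_induced_entry U (B j) (nat \<lfloor>t * measure M U / measure M (B j)\<rfloor>))
      - measure M U * measure M (no_entry (B j) (nat \<lfloor>t / measure M (B j)\<rfloor>))) \<longlonglongrightarrow> 0"
    (is "?D \<longlonglongrightarrow> 0")
proof -
  define c b where "c = measure M U" and "b j = measure M (B j)" for j
  have "0 < c" using \<open>measure M U > 0\<close> unfolding c_def .
  have b_0: "b \<longlonglongrightarrow> 0" using B_small unfolding b_def .
  note rounded_at_top = nat_floor_ceiling_divide_at_top[OF b_0 assms(5)[folded b_def]]
  have deviation_0: "(\<lambda>j. visit_deviation U (f j)) \<longlonglongrightarrow> 0" if "filterlim f at_top sequentially" for f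
    using filterlim_compose[OF visit_deviation_tendsto_0[OF U] that] .
  show ?thesis
    unfolding tendsto_iff
  proof (intro allI impI)
    fix r :: real assume "0 < r"
    obtain N where "\<And>L. L \<ge> N \<Longrightarrow> visit_deviation U L < r / 3"
      using order_tendstoD(2)[OF visit_deviation_tendsto_0[OF U], of "r / 3"] \<open>0 < r\<close>
      unfolding eventually_sequentially by auto
    then obtain L where "1 \<le> L" "visit_deviation U L < r / 3" by (meson le_add1 le_add2)
    define \<epsilon> where "\<epsilon> = min (1 / 2) (r / (3 * c * t))"
    have \<epsilon>: "0 < \<epsilon>" "\<epsilon> \<le> 1 / 2" "c * (\<epsilon> * t) \<le> r / 3"
      using \<open>0 < r\<close> \<open>0 < c\<close> \<open>t > 0\<close> by (auto simp: \<epsilon>_def min_def field_simps)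
    define R where "R j = c * (\<epsilon> * t + 2 * b j) + real L * b j + visit_deviation U L
      + 6 / (\<epsilon> * c) * (visit_deviation U (nat \<lfloor>(1 - \<epsilon>) * t / b j\<rfloor>)
        + visit_deviation U (nat \<lceil>(1 + \<epsilon>) * t / b j\<rceil>))" for j
    have "R \<longlonglongrightarrow> c * (\<epsilon> * t + 2 * 0) + real L * 0 + visit_deviation U L + 6 / (\<epsilon> * c) * (0 + 0)"
      unfolding R_def using \<epsilon>(1,2) \<open>t > 0\<close>
      by (intro tendsto_intros b_0 deviation_0 rounded_at_top) auto
    then have "eventually (\<lambda>j. R j < r) sequentially"
      by (rule order_tendstoD(2)) (use \<epsilon>(3) \<open>visit_deviation U L < r / 3\<close> \<open>0 < r\<close> in simp)
    moreover have "eventually (\<lambda>j. b j < min t (\<epsilon> * t * c / 4)) sequentially"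
      using b_0 \<epsilon>(1) \<open>0 < c\<close> \<open>t > 0\<close> by (intro order_tendstoD(2)) auto
    ultimately show "eventually (\<lambda>j. dist (?D j) 0 < r) sequentially"
    proof eventually_elim
      case (elim j)
      then show ?case
        using no_induced_entry_estimate[OF U B \<open>B j \<subseteq> U\<close> \<open>measure M U > 0\<close> assms(5) \<open>1 \<le> L\<close> \<epsilon>(1,2),
            of t]
        unfolding R_def b_def c_def by (simp add: ac_simps)
    qed
  qed
qed

lemma entry_dist_eq_measure_no_entry:
  assumes "measure M B > 0" and "t > 0"
  shows "entry_dist M T B t = measure M (no_entry B (nat \<lfloor>t / measure M B\<rfloor>))"
  unfolding entry_dist_def no_entry_def
  using ereal_less_entry_time_iff[of "t / measure M B" T B] assms by simp

lemma induced_entry_dist_eq_measure_no_induced_entry: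
  assumes "measure M U > 0" and "measure M B > 0" and "t > 0"
  shows "induced_entry_dist M T U B t
    = measure M (no_induced_entry U B (nat \<lfloor>t * measure M U / measure M B\<rfloor>)) / measure M U"
proof -
  have "t / induced_measure M U B = t * measure M U / measure M B"
    unfolding induced_measure_def using assms by simp
  then show ?thesis
    unfolding induced_entry_dist_def no_induced_entry_def
    using ereal_less_entry_time_iff[of "t * measure M U / measure M B" "induced_map T U" B] assms
    by (simp add: induced_measure_def Int_commute)
qed

lemma induced_entry_dist_minus_entry_dist_tendsto_0:
  assumes U[measurable]: "U \<in> sets M" and "measure M U > 0"
    and "\<And>j. B j \<in> sets M" and "\<And>j. B j \<subseteq> U" and "\<And>j. measure M (B j) > 0"
    and "(\<lambda>j. measure M (B j)) \<longlonglongrightarrow> 0" and "t > 0"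
  shows "(\<lambda>j. induced_entry_dist M T U (B j) t - entry_dist M T (B j) t) \<longlonglongrightarrow> 0"
proof -
  have "(\<lambda>j. (measure M (no_induced_entry U (B j) (nat \<lfloor>t * measure M U / measure M (B j)\<rfloor>))
      - measure M U * measure M (no_entry (B j) (nat \<lfloor>t / measure M (B j)\<rfloor>))) / measure M U)
    \<longlonglongrightarrow> 0 / measure M U"
    using no_induced_entry_minus_no_entry_tendsto_0[OF assms] assms(2) by (intro tendsto_divide) auto
  then show ?thesis
    using assms(2,5,7)
    by (simp add: induced_entry_dist_eq_measure_no_induced_entry entry_dist_eq_measure_no_entry
        diff_divide_distrib)
qed

end

theorem theorem1:
  fixes M :: "'a measure" and T :: "'a \<Rightarrow> 'a" and U :: "'a set" and B :: "nat \<Rightarrow> 'a set"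
  assumes "prob_space M"
    and "mpreserving M T"
    and "ergodic_map M T"
    and "U \<in> sets M" and "measure M U > 0"
    and "\<And>j. B j \<in> sets M" and "\<And>j. B j \<subseteq> U" and "\<And>j. measure M (B j) > 0"
    and "(\<lambda>j. measure M (B j)) \<longlonglongrightarrow> 0"
    and "(\<forall>t>0. convergent (\<lambda>j. entry_dist M T (B j) t))
         \<or> (\<forall>t>0. convergent (\<lambda>j. induced_entry_dist M T U (B j) t))"
  shows "(\<forall>t>0. convergent (\<lambda>j. entry_dist M T (B j) t))
       \<and> (\<forall>t>0. convergent (\<lambda>j. induced_entry_dist M T U (B j) t))
       \<and> (\<forall>t>0. lim (\<lambda>j. entry_dist M T (B j) t) = lim (\<lambda>j. induced_entry_dist M T U (B j) t))"
proof -
  interpret ergodic_system M T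
    using assms(1-3) by (simp add: ergodic_system_def ergodic_system_axioms_def)
  have "convergent (\<lambda>j. entry_dist M T (B j) t) \<and> convergent (\<lambda>j. induced_entry_dist M T U (B j) t)
      \<and> lim (\<lambda>j. entry_dist M T (B j) t) = lim (\<lambda>j. induced_entry_dist M T U (B j) t)"
    if "t > 0" for t
    using convergent_and_lim_eq_if_diff_tendsto_0[OF
        induced_entry_dist_minus_entry_dist_tendsto_0[OF assms(4-9) that]] assms(10) that
    by blast
  then show ?thesis by blast
qed

end
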